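(* For all integers $m\ge1$, $n\ge1$ one has the identity $$ {}_{2m+5}F_{2m+4}\!\left[\begin{matrix}a,\frac a2+1,b_1,c_1,\dots,b_{m+1},c_{m+1},-n\\ \frac a2,1+a-b_1,1+a-c_1,\dots,1+a-b_{m+1},1+a-c_{m+1},1+a+n\end{matrix};1\right] $$ $$ =\frac{(1+a)_n(1+a-b_m-c_{m+1})_n(1+a-b_{m+1}-c_{m+1})_n(1+a-c_m-c_{m+1})_n}{(1+a-b_m)_n(1+a-b_{m+1})_n(1+a-c_m)_n(1+a-c_{m+1})_n} \sum_{0\le i_1\le\dots\le i_m\le n}\frac{(-n)_{i_m}(c_{m+1})_{i_m}}{(-a-n+b_m+c_{m+1})_{i_m}(-a-n+b_{m+1}+c_{m+1})_{i_m}} $$ $$ \cdot\frac{(-1-2a-n+b_m+b_{m+1}+c_m+c_{m+1})_{i_m}\,(-a-n+c_{m+1})_{i_m-i_{m-1}}\,(b_{m+1})_{i_{m-1}}}{(-a-n+c_m+c_{m+1})_{i_m}\,(i_m-i_{m-1})!\,(-1-2a-n+b_m+b_{m+1}+c_m+c_{m+1})_{i_{m-1}}} \prod_{k=1}^{m-1}\frac{(1+a-b_k-c_k)_{i_k-i_{k-1}}(b_{k+1})_{i_k}(c_{k+1})_{i_k}}{(i_k-i_{k-1})!\,(1+a-b_k)_{i_k}(1+a-c_k)_{i_k}}, $$ where $i_0=0$ and an empty product (case $m=1$) equals $1$.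
   Context: $(x)_k=x(x+1)\cdots(x+k-1)$, $(x)_0=1$. The hypergeometric series is ${}_{q+1}F_q\!\left[\begin{matrix}\alpha_0,\dots,\alpha_q\\ \beta_1,\dots,\beta_q\end{matrix};z\right]=\sum_{k\ge0}\frac{(\alpha_0)_k\cdots(\alpha_q)_k}{k!\,(\beta_1)_k\cdots(\beta_q)_k}z^k$; here it terminates because of the parameter $-n$. The parameters $a,b_1,c_1,\dots,b_{m+1},c_{m+1}$ are complex numbers for which all terms are defined (equivalently, the identity holds as an identity of rational functions in these parameters). *)

theory Defs
  imports Complex_Main
begin

definition hyper_term :: "complex list \<Rightarrow> complex list \<Rightarrow> complex \<Rightarrow> nat \<Rightarrow> complex" where
  "hyper_term as bs z k =
     (\<Prod>x\<leftarrow>as. pochhammer x k) / (fact k * (\<Prod>y\<leftarrow>bs. pochhammer y k)) * z ^ k"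

definition hypergeom :: "complex list \<Rightarrow> complex list \<Rightarrow> complex \<Rightarrow> complex" where
  "hypergeom as bs z = (\<Sum>k. hyper_term as bs z k)"

definition chains :: "nat \<Rightarrow> nat \<Rightarrow> (nat \<Rightarrow> nat) set" where
  "chains m n = {i. i 0 = 0 \<and> (\<forall>k>m. i k = 0) \<and>
                    (\<forall>k\<in>{1..m}. i (k - 1) \<le> i k) \<and> i m \<le> n}"

end

theory Submission
  imports Defs
begin

(* Write the very-well-poised series as a times sum_k w_k prod_q R(b_q, c_q; k), where
   R(b, c; k) = (b)_k (c)_k / ((1+a-b)_k (1+a-c)_k).  By the Pfaff-Saalschuetz summation
   (proved by a telescoping WZ certificate) each R(b, c; k) is a terminating balanced 3F2 summed
   over j <= k.  Expanding R(b_1, c_1; k) in this way and interchanging the sums over k and j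
   leaves, for each j, a very-well-poised series of the same shape with one pair fewer and
   parameters a + 2j, b_(r+1) + j, c_(r+1) + j, n - j: this is the first step i_1 = j of the chain.
   Induction on m reduces everything to two pairs, where Whipple's transformation (a further
   peeling step closed by Dougall's 5F4 sum) gives a balanced 4F3, and Sears' transformation of
   that 4F3 yields the factors of the summand involving i_m. *)

lemma pochhammer_reflect:
  "pochhammer (x :: 'a::comm_ring_1) j = (-1)^j * pochhammer (1 - x - of_nat j) j"
  using pochhammer_minus[of "- x" j] by (simp add: algebra_simps)

lemma pochhammer_add_reflect:
  "pochhammer (x :: 'a::comm_ring_1) (r + j)
     = pochhammer x r * ((-1)^j * pochhammer (1 - x - of_nat (r + j)) j)"
  unfolding pochhammer_product' pochhammer_reflect[of "x + of_nat r" j] by (simp add: algebra_simps)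

lemma pochhammer_minus_of_nat:
  "pochhammer (- of_nat N :: 'a::field_char_0) j = (-1)^j * fact j * of_nat (N choose j)"
proof -
  have "pochhammer (- of_nat N :: 'a) j = (-1)^j * ((-1)^j * pochhammer (- of_nat N) j)"
    by simp
  also have "(-1)^j * pochhammer (- of_nat N :: 'a) j = fact j * (of_nat N gchoose j)"
    using gbinomial_pochhammer[of "of_nat N :: 'a" j] by (simp add: field_simps)
  finally show ?thesis
    by (simp add: binomial_gbinomial mult.assoc)
qed

lemma pochhammer_minus_of_nat_product:
  assumes "j \<le> n"
  shows "pochhammer (- of_nat n :: 'a::comm_ring_1) (j + l)
           = pochhammer (- of_nat n) j * pochhammer (- of_nat (n - j)) l"
  using assms by (simp add: pochhammer_product' of_nat_diff)

lemma pochhammer_minus_of_nat_add: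
  "pochhammer (- of_nat (j + l) :: 'a::field_char_0) j = (-1)^j * fact (j + l) / fact l"
  unfolding pochhammer_minus_of_nat by (subst binomial_fact) auto

lemma pochhammer_shift_neq_0:
  fixes x :: "'a::comm_semiring_1"
  assumes "pochhammer x n \<noteq> 0" "j \<le> n"
  shows "pochhammer (x + of_nat j) (n - j) \<noteq> 0"
  using assms pochhammer_product[of j n x] by auto

lemma pochhammer_half_Suc:
  "a * pochhammer (a / 2 + 1) k = pochhammer (a / 2 :: 'a::field_char_0) k * (a + 2 * of_nat k)"
proof -
  have "a / 2 * pochhammer (a / 2 + 1) k = pochhammer (a / 2) k * (a / 2 + of_nat k)"
    by (metis pochhammer_Suc pochhammer_rec)
  then show ?thesis
    by (simp add: field_simps)
qed

lemma binomial_neighbours_proportional: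
  fixes i s :: nat
  defines "D \<equiv> fact (Suc i + s) / (fact (Suc i) * fact (Suc s)) :: 'a::field_char_0"
  shows "of_nat (Suc (Suc i + s) choose Suc i) = D * (of_nat i + of_nat s + 2)"
    and "of_nat (Suc i + s choose Suc i) = D * (of_nat s + 1)"
    and "of_nat (Suc i + s choose i) = D * (of_nat i + 1)"
proof -
  have i1: "(of_nat i + 1 :: 'a) \<noteq> 0" and s1: "(of_nat s + 1 :: 'a) \<noteq> 0"
    by (metis of_nat_Suc of_nat_neq_0 add.commute)+
  show "of_nat (Suc (Suc i + s) choose Suc i) = D * (of_nat i + of_nat s + 2)"
    by (subst binomial_fact) (simp_all add: D_def algebra_simps)
  have "(fact (Suc s) :: 'a) = (of_nat s + 1) * fact s"
    by simp
  then have "D * (of_nat s + 1) = fact (Suc i + s) / (fact (Suc i) * fact s)"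
    using s1 by (simp add: D_def mult.left_commute[of "fact (Suc i)"] del: fact_Suc)
  moreover have "of_nat (Suc i + s choose Suc i) = fact (Suc i + s) / (fact (Suc i) * fact s :: 'a)"
    by (subst binomial_fact) (simp_all del: fact_Suc)
  ultimately show "of_nat (Suc i + s choose Suc i) = D * (of_nat s + 1)"
    by simp
  have "(fact (Suc i) :: 'a) = (of_nat i + 1) * fact i"
    by simp
  then have "D * (of_nat i + 1) = fact (Suc i + s) / (fact i * fact (Suc s))"
    using i1 by (simp add: D_def mult.assoc del: fact_Suc)
  moreover have "of_nat (Suc i + s choose i) = fact (Suc i + s) / (fact i * fact (Suc s) :: 'a)"
    by (subst binomial_fact) (simp_all del: fact_Suc)
  ultimately show "of_nat (Suc i + s choose i) = D * (of_nat i + 1)"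
    by simp
qed

lemma sum_triangle_swap:
  fixes n :: nat
  shows "(\<Sum>k\<le>n. \<Sum>j\<le>k. h k j) = (\<Sum>j\<le>n. \<Sum>l\<le>n - j. h (j + l) j)"
proof -
  have "(\<Sum>k\<le>n. \<Sum>j\<le>k. h k j) = (\<Sum>k\<le>n. \<Sum>j\<le>k. h (j + (k - j)) j)"
    by (intro sum.cong refl) (simp add: le_add_diff_inverse)
  also have "\<dots> = (\<Sum>(j, l)\<in>{(j, l). j + l \<le> n}. h (j + l) j)"
    using sum.triangle_reindex_eq[of "\<lambda>j l. h (j + l) j" n] by simp
  also have "{(j, l). j + l \<le> n} = Sigma {..n} (\<lambda>j. {..n - j})"
    by auto
  finally show ?thesis
    by (simp add: sum.Sigma)
qed

lemma prod_ratio_regroup: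
  fixes Q S :: "nat \<Rightarrow> 'a::field"
  assumes "1 \<le> m"
  shows "(\<Prod>r<Suc m. Q (r + 2) / S (r + 2))
       = Q 2 * (Q (m + 2) / (S (m + 1) * S (m + 2))) * (\<Prod>k=1..m-1. Q (k + 2) / S (k + 1))"
  using assms
proof (induction m rule: dec_induct)
  case base
  then show ?case
    by (simp add: numeral_2_eq_2 numeral_3_eq_3)
next
  case (step m)
  then have "(\<Prod>k=1..Suc m - 1. Q (k + 2) / S (k + 1)) = (\<Prod>k=1..m-1. Q (k + 2) / S (k + 1)) * (Q (m + 2) / S (m + 1))"
    by (cases m) (simp_all add: prod.nat_ivl_Suc')
  with step.IH show ?case
    by (simp add: field_simps)
qed

lemma prod_list_map_concat_pairs:
  "prod_list (map f (concat (map (\<lambda>j. [g j, h j]) [1..<N]))) = (\<Prod>j\<in>{1..<N}. f (g j) * f (h j))"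
proof -
  have "prod_list (map f (concat (map (\<lambda>j. [g j, h j]) [1..<N])))
      = prod_list (map (\<lambda>j. f (g j) * f (h j)) [1..<N])"
    by (induction N) (auto simp: map_concat)
  then show ?thesis
    using prod.distinct_set_conv_list[OF distinct_upt, of "\<lambda>j. f (g j) * f (h j)" 1 N] by simp
qed

section \<open>The Pfaff--Saalschuetz summation\<close>

definition saalschuetz_summand :: "'a::field_char_0 \<Rightarrow> 'a \<Rightarrow> 'a \<Rightarrow> nat \<Rightarrow> nat \<Rightarrow> 'a" where
  "saalschuetz_summand A B C N j = of_nat (N choose j) * pochhammer A j * pochhammer B j
     * pochhammer (C - A - B) (N - j) * pochhammer (C + of_nat j) (N - j)"

definition saalschuetz_certificate :: "'a::field_char_0 \<Rightarrow> 'a \<Rightarrow> 'a \<Rightarrow> nat \<Rightarrow> nat \<Rightarrow> 'a" where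
  "saalschuetz_certificate A B C N j = (if j = 0 then 0 else
     - of_nat (N choose (j - 1)) * pochhammer A j * pochhammer B j
     * pochhammer (C - A - B) (Suc N - j) * pochhammer (C + of_nat j - 1) (Suc N - j))"

lemma saalschuetz_certificate_interior:
  fixes A B C :: "'a::field_char_0"
  assumes N: "N = Suc i + s"
  shows "saalschuetz_summand A B C (Suc N) (Suc i)
           - (C - A + of_nat N) * (C - B + of_nat N) * saalschuetz_summand A B C N (Suc i)
         = saalschuetz_certificate A B C N (Suc (Suc i)) - saalschuetz_certificate A B C N (Suc i)"
proof -
  have idx: "Suc N - Suc i = Suc s" "N - Suc i = s" "Suc N - Suc (Suc i) = s" "Suc (Suc i) - 1 = Suc i"
      "Suc i - 1 = i" "(Suc (Suc i) = 0) = False" "(Suc i = 0) = False"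
    using N by auto
  have shift: "pochhammer (C + of_nat (Suc i) - 1) (Suc s) = (C + of_nat i) * pochhammer (C + of_nat (Suc i)) s"
    "C + of_nat (Suc (Suc i)) - 1 = C + of_nat (Suc i)"
    by (simp_all add: pochhammer_rec algebra_simps)
  show ?thesis
    unfolding saalschuetz_summand_def saalschuetz_certificate_def idx if_False shift
    unfolding N binomial_neighbours_proportional pochhammer_Suc of_nat_Suc of_nat_add
    by algebra
qed

lemma saalschuetz_certificate_telescopes:
  fixes A B C :: "'a::field_char_0"
  assumes "j \<le> Suc N"
  shows "saalschuetz_summand A B C (Suc N) j
           - (C - A + of_nat N) * (C - B + of_nat N) * saalschuetz_summand A B C N j
         = saalschuetz_certificate A B C N (Suc j) - saalschuetz_certificate A B C N j"
proof (cases j)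
  case 0
  then show ?thesis
    by (simp add: saalschuetz_summand_def saalschuetz_certificate_def pochhammer_Suc algebra_simps)
next
  case (Suc i)
  show ?thesis
  proof (cases "j = Suc N")
    case True
    then show ?thesis
      by (simp add: saalschuetz_summand_def saalschuetz_certificate_def)
  next
    case False
    then obtain s where "N = Suc i + s"
      using assms Suc by (metis le_Suc_eq nat_le_iff_add)
    then show ?thesis
      unfolding Suc by (rule saalschuetz_certificate_interior)
  qed
qed

lemma saalschuetz_polynomial:
  fixes A B C :: "'a::field_char_0"
  shows "(\<Sum>j\<le>N. of_nat (N choose j) * pochhammer A j * pochhammer B j
            * pochhammer (C - A - B) (N - j) * pochhammer (C + of_nat j) (N - j))
       = pochhammer (C - A) N * pochhammer (C - B) N"
proof (induction N)
  case 0
  then show ?case by simp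
next
  case (Suc N)
  let ?f = "saalschuetz_summand A B C" and ?g = "saalschuetz_certificate A B C N"
  let ?r = "(C - A + of_nat N) * (C - B + of_nat N)"
  have "(\<Sum>j\<le>Suc N. ?f (Suc N) j) - ?r * (\<Sum>j\<le>Suc N. ?f N j)
      = (\<Sum>j\<le>Suc N. ?g (Suc j) - ?g j)"
    unfolding sum_distrib_left sum_subtractf[symmetric]
    by (intro sum.cong refl saalschuetz_certificate_telescopes) simp
  also have "\<dots> = ?g (Suc (Suc N)) - ?g 0"
    using sum_lessThan_telescope[of ?g "Suc (Suc N)"] by (simp add: lessThan_Suc_atMost)
  also have "\<dots> = 0"
    by (simp add: saalschuetz_certificate_def)
  finally have "(\<Sum>j\<le>Suc N. ?f (Suc N) j) = ?r * (\<Sum>j\<le>N. ?f N j)"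
    by (simp add: saalschuetz_summand_def)
  also have "(\<Sum>j\<le>N. ?f N j) = pochhammer (C - A) N * pochhammer (C - B) N"
    using Suc.IH by (simp add: saalschuetz_summand_def)
  finally show ?case
    by (simp add: saalschuetz_summand_def pochhammer_Suc algebra_simps)
qed

theorem pfaff_saalschuetz:
  fixes A B C :: "'a::field_char_0"
  assumes C_nonzero: "pochhammer C N \<noteq> 0" and X_nonzero: "pochhammer (1 + A + B - C - of_nat N) N \<noteq> 0"
  shows "(\<Sum>j\<le>N. pochhammer (- of_nat N) j * pochhammer A j * pochhammer B j
            / (fact j * pochhammer C j * pochhammer (1 + A + B - C - of_nat N) j))
       = pochhammer (C - A) N * pochhammer (C - B) N / (pochhammer C N * pochhammer (C - A - B) N)"
proof -
  define X where "X = 1 + A + B - C - of_nat N"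
  have reflect: "pochhammer (C - A - B) (r + j) = pochhammer (C - A - B) r * ((-1)^j * pochhammer X j)"
    if "N = r + j" for r j
    using that pochhammer_add_reflect[of "C - A - B" r j] by (simp add: X_def algebra_simps)
  have CAB: "pochhammer (C - A - B) N \<noteq> 0"
    using X_nonzero reflect[of 0 N] by (simp add: X_def)
  have "(\<Sum>j\<le>N. pochhammer (- of_nat N) j * pochhammer A j * pochhammer B j
            / (fact j * pochhammer C j * pochhammer X j)) * (pochhammer C N * pochhammer (C - A - B) N)
      = (\<Sum>j\<le>N. of_nat (N choose j) * pochhammer A j * pochhammer B j
            * pochhammer (C - A - B) (N - j) * pochhammer (C + of_nat j) (N - j))"
    unfolding sum_distrib_right
  proof (rule sum.cong)
    fix j assume "j \<in> {..N}"
    then obtain r where N: "N = j + r"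
      by (auto simp: le_iff_add)
    have "pochhammer C j \<noteq> 0" "pochhammer X j \<noteq> 0"
      using pochhammer_neq_0_mono[OF C_nonzero] pochhammer_neq_0_mono[OF X_nonzero] N by (auto simp: X_def)
    moreover have "pochhammer C N = pochhammer C j * pochhammer (C + of_nat j) r"
      unfolding N by (rule pochhammer_product')
    moreover have "pochhammer (C - A - B) N = pochhammer (C - A - B) r * ((-1)^j * pochhammer X j)"
      using reflect[of r j] N by (simp add: add.commute)
    ultimately show "pochhammer (- of_nat N) j * pochhammer A j * pochhammer B j
            / (fact j * pochhammer C j * pochhammer X j) * (pochhammer C N * pochhammer (C - A - B) N)
      = of_nat (N choose j) * pochhammer A j * pochhammer B j
            * pochhammer (C - A - B) (N - j) * pochhammer (C + of_nat j) (N - j)"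
      unfolding pochhammer_minus_of_nat by (simp add: N field_simps)
  qed simp
  also have "\<dots> = pochhammer (C - A) N * pochhammer (C - B) N"
    by (rule saalschuetz_polynomial)
  finally show ?thesis
    using C_nonzero CAB by (simp add: X_def field_simps)
qed

section \<open>Sears' transformation of a balanced terminating 4F3\<close>

lemma pochhammer_ratio_expansion:
  fixes B C D :: "'a::field_char_0"
  assumes D: "pochhammer D k \<noteq> 0"
  shows "pochhammer B k * pochhammer C k / pochhammer D k
       = (\<Sum>j\<le>k. of_nat (k choose j) * pochhammer (D - B) j * pochhammer (D - C) j
            * pochhammer (B + C - D) (k - j) / pochhammer D j)"
proof -
  have "(\<Sum>j\<le>k. of_nat (k choose j) * pochhammer (D - B) j * pochhammer (D - C) j
            * pochhammer (B + C - D) (k - j) / pochhammer D j)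
      = (\<Sum>j\<le>k. of_nat (k choose j) * pochhammer (D - B) j * pochhammer (D - C) j
            * pochhammer (B + C - D) (k - j) * pochhammer (D + of_nat j) (k - j)) / pochhammer D k"
    unfolding sum_divide_distrib
  proof (rule sum.cong)
    fix j assume "j \<in> {..k}"
    then have split: "pochhammer D k = pochhammer D j * pochhammer (D + of_nat j) (k - j)"
      by (simp add: pochhammer_product)
    then have "pochhammer D j \<noteq> 0" "pochhammer (D + of_nat j) (k - j) \<noteq> 0"
      using D by auto
    then show "of_nat (k choose j) * pochhammer (D - B) j * pochhammer (D - C) j
            * pochhammer (B + C - D) (k - j) / pochhammer D j
      = of_nat (k choose j) * pochhammer (D - B) j * pochhammer (D - C) j
            * pochhammer (B + C - D) (k - j) * pochhammer (D + of_nat j) (k - j) / pochhammer D k"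
      unfolding split by (simp add: field_simps)
  qed simp
  also have "\<dots> = pochhammer B k * pochhammer C k / pochhammer D k"
    using saalschuetz_polynomial[of k "D - B" "D - C" D] by (simp add: algebra_simps)
  finally show ?thesis ..
qed

lemma terminating_4F3_double_sum:
  fixes A B C D E F :: "'a::field_char_0"
  assumes D: "pochhammer D n \<noteq> 0" and E: "pochhammer E n \<noteq> 0" and F: "pochhammer F n \<noteq> 0"
  shows "(\<Sum>k\<le>n. pochhammer (- of_nat n) k * pochhammer A k * pochhammer B k * pochhammer C k
            / (fact k * pochhammer D k * pochhammer E k * pochhammer F k))
       = (\<Sum>j\<le>n. pochhammer (- of_nat n) j * pochhammer A j * pochhammer (D - B) j * pochhammer (D - C) j
            / (fact j * pochhammer D j * pochhammer E j * pochhammer F j)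
          * (\<Sum>l\<le>n - j. pochhammer (- of_nat (n - j)) l * pochhammer (A + of_nat j) l
              * pochhammer (B + C - D) l
              / (fact l * pochhammer (E + of_nat j) l * pochhammer (F + of_nat j) l)))"
    (is "(\<Sum>k\<le>n. ?S k) = (\<Sum>j\<le>n. ?G j * (\<Sum>l\<le>n - j. ?H j l))")
proof -
  let ?T = "\<lambda>k j. pochhammer (- of_nat n) k * pochhammer A k / (fact k * pochhammer E k * pochhammer F k)
     * (of_nat (k choose j) * pochhammer (D - B) j * pochhammer (D - C) j
        * pochhammer (B + C - D) (k - j) / pochhammer D j)"
  have "(\<Sum>k\<le>n. ?S k) = (\<Sum>k\<le>n. \<Sum>j\<le>k. ?T k j)"
  proof (rule sum.cong)
    fix k assume "k \<in> {..n}"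
    then have "pochhammer D k \<noteq> 0"
      using pochhammer_neq_0_mono[OF D] by simp
    from pochhammer_ratio_expansion[OF this, of B C] show "?S k = (\<Sum>j\<le>k. ?T k j)"
      unfolding sum_distrib_left[symmetric] by (simp add: divide_inverse mult_ac)
  qed simp
  also have "\<dots> = (\<Sum>j\<le>n. \<Sum>l\<le>n - j. ?T (j + l) j)"
    by (rule sum_triangle_swap)
  also have "\<dots> = (\<Sum>j\<le>n. ?G j * (\<Sum>l\<le>n - j. ?H j l))"
    unfolding sum_distrib_left
  proof (intro sum.cong refl)
    fix j l assume "j \<in> {..n}" "l \<in> {..n - j}"
    then have jl: "j + l \<le> n"
      by simp
    have nonzero: "pochhammer E j \<noteq> 0" "pochhammer (E + of_nat j) l \<noteq> 0"
      "pochhammer F j \<noteq> 0" "pochhammer (F + of_nat j) l \<noteq> 0" "pochhammer D j \<noteq> 0"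
      using pochhammer_neq_0_mono[OF E jl] pochhammer_neq_0_mono[OF F jl] pochhammer_neq_0_mono[OF D, of j] jl
      by (auto simp: pochhammer_product')
    have minus_n: "pochhammer (- of_nat n :: 'a) (j + l) = pochhammer (- of_nat n) j * pochhammer (- of_nat (n - j)) l"
      using jl by (intro pochhammer_minus_of_nat_product) simp
    have binomial: "(of_nat ((j + l) choose j) :: 'a) = fact (j + l) / (fact j * fact l)"
      by (subst binomial_fact) auto
    show "?T (j + l) j = ?G j * ?H j l"
      unfolding minus_n binomial pochhammer_product'[of A j l] pochhammer_product'[of E j l]
        pochhammer_product'[of F j l]
      using nonzero by (simp add: field_simps)
  qed
  finally show ?thesis .
qed

lemma sears_inner_sum:
  fixes A B C D E F :: "'a::field_char_0"
  assumes bal: "D + E + F = A + B + C + 1 - of_nat n" and n: "n = j + r"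
    and E: "pochhammer E n \<noteq> 0" and F: "pochhammer F n \<noteq> 0"
  shows "(\<Sum>l\<le>r. pochhammer (- of_nat r) l * pochhammer (A + of_nat j) l * pochhammer (B + C - D) l
            / (fact l * pochhammer (E + of_nat j) l * pochhammer (F + of_nat j) l))
       = (-1)^r * pochhammer (E - A) r * pochhammer (1 + A - F - of_nat n + of_nat j) r
           / (pochhammer (E + of_nat j) r * pochhammer (F + of_nat j) r)"
proof -
  have shift_F: "1 + (A + of_nat j) + (B + C - D) - (E + of_nat j) - of_nat r = F + of_nat j"
    and shift_B: "(E + of_nat j) - (B + C - D) = 1 + A - F - of_nat n + of_nat j"
    and shift_AB: "(E + of_nat j) - (A + of_nat j) - (B + C - D) = 1 - F - of_nat n"
    using bal unfolding n by (simp_all add: algebra_simps)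
  have reflect: "pochhammer (F + of_nat j) r = (-1)^r * pochhammer (1 - F - of_nat n) r"
    using pochhammer_reflect[of "F + of_nat j" r] unfolding n by (simp add: algebra_simps)
  have "pochhammer (E + of_nat j) r \<noteq> 0" "pochhammer (F + of_nat j) r \<noteq> 0"
    using E F unfolding n pochhammer_product' by auto
  with pfaff_saalschuetz[of "E + of_nat j" r "A + of_nat j" "B + C - D"] show ?thesis
    unfolding shift_F shift_B shift_AB reflect by (simp add: field_simps)
qed

theorem sears_transformation:
  fixes A B C D E F :: "'a::field_char_0"
  assumes bal: "D + E + F = A + B + C + 1 - of_nat n"
    and D: "pochhammer D n \<noteq> 0" and E: "pochhammer E n \<noteq> 0" and F: "pochhammer F n \<noteq> 0"
    and EA: "pochhammer (E - A) n \<noteq> 0" and FA: "pochhammer (F - A) n \<noteq> 0"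
  shows "(\<Sum>k\<le>n. pochhammer (- of_nat n) k * pochhammer A k * pochhammer B k * pochhammer C k
            / (fact k * pochhammer D k * pochhammer E k * pochhammer F k))
    = pochhammer (E - A) n * pochhammer (F - A) n / (pochhammer E n * pochhammer F n)
      * (\<Sum>j\<le>n. pochhammer (- of_nat n) j * pochhammer A j * pochhammer (D - B) j * pochhammer (D - C) j
          / (fact j * pochhammer D j * pochhammer (1 + A - E - of_nat n) j
             * pochhammer (1 + A - F - of_nat n) j))"
    (is "_ = ?c * (\<Sum>j\<le>n. ?t j)")
proof -
  let ?G = "\<lambda>j. pochhammer (- of_nat n) j * pochhammer A j * pochhammer (D - B) j * pochhammer (D - C) j
    / (fact j * pochhammer D j * pochhammer E j * pochhammer F j)"
  let ?H = "\<lambda>j l. pochhammer (- of_nat (n - j)) l * pochhammer (A + of_nat j) l * pochhammer (B + C - D) l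
    / (fact l * pochhammer (E + of_nat j) l * pochhammer (F + of_nat j) l)"
  have "?G j * (\<Sum>l\<le>n - j. ?H j l) = ?c * ?t j" if "j \<le> n" for j
  proof -
    obtain r where n: "n = j + r"
      using \<open>j \<le> n\<close> by (auto simp: le_iff_add)
    then have "n - j = r"
      by simp
    have EA_split: "pochhammer (E - A) n
        = pochhammer (E - A) r * ((-1)^j * pochhammer (1 + A - E - of_nat n) j)"
      using pochhammer_add_reflect[of "E - A" r j] unfolding n by (simp add: algebra_simps)
    have FA_split: "pochhammer (F - A) n = (-1)^n * (pochhammer (1 + A - F - of_nat n) j
        * pochhammer (1 + A - F - of_nat n + of_nat j) r)"
      using pochhammer_reflect[of "F - A" n] pochhammer_product'[of "1 + A - F - of_nat n" j r]
      unfolding n by (simp add: algebra_simps)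
    have E_split: "pochhammer E n = pochhammer E j * pochhammer (E + of_nat j) r"
      and F_split: "pochhammer F n = pochhammer F j * pochhammer (F + of_nat j) r"
      unfolding n by (rule pochhammer_product')+
    have "pochhammer E j \<noteq> 0" "pochhammer (E + of_nat j) r \<noteq> 0"
      "pochhammer F j \<noteq> 0" "pochhammer (F + of_nat j) r \<noteq> 0"
      "pochhammer (1 + A - E - of_nat n) j \<noteq> 0" "pochhammer (1 + A - F - of_nat n) j \<noteq> 0"
      using E F EA FA unfolding EA_split FA_split E_split F_split by auto
    moreover have "((-1::'a)^n) = (-1)^r * (-1)^j"
      unfolding n by (simp add: power_add)
    ultimately show ?thesis
      unfolding \<open>n - j = r\<close> sears_inner_sum[OF bal n E F] EA_split FA_split E_split F_split
      by (simp add: n field_simps)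
  qed
  then show ?thesis
    unfolding terminating_4F3_double_sum[OF D E F] sum_distrib_left by (intro sum.cong) auto
qed

section \<open>Very-well-poised sums\<close>

definition wp_ratio :: "'a::field_char_0 \<Rightarrow> 'a \<Rightarrow> 'a \<Rightarrow> nat \<Rightarrow> 'a" where
  "wp_ratio a b c k = pochhammer b k * pochhammer c k
     / (pochhammer (1 + a - b) k * pochhammer (1 + a - c) k)"

definition wp_ratio_prod :: "nat \<Rightarrow> 'a::field_char_0 \<Rightarrow> (nat \<Rightarrow> 'a) \<Rightarrow> (nat \<Rightarrow> 'a) \<Rightarrow> nat \<Rightarrow> 'a" where
  "wp_ratio_prod q a b c k = (\<Prod>r<q. wp_ratio a (b (Suc r)) (c (Suc r)) k)"

definition vwp_weight :: "'a::field_char_0 \<Rightarrow> nat \<Rightarrow> nat \<Rightarrow> 'a" where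
  "vwp_weight a n k = pochhammer a k * (a + 2 * of_nat k) * pochhammer (- of_nat n) k
     / (fact k * pochhammer (1 + a + of_nat n) k)"

(* vwp_sum q a b c n is a times the terminating very-well-poised series with numerator
   parameters a, a/2 + 1, b 1, c 1, ..., b q, c q, -n; the factor a clears the denominator
   parameter a/2, since a (a/2 + 1)_k = (a + 2k) (a/2)_k. *)
definition vwp_sum :: "nat \<Rightarrow> 'a::field_char_0 \<Rightarrow> (nat \<Rightarrow> 'a) \<Rightarrow> (nat \<Rightarrow> 'a) \<Rightarrow> nat \<Rightarrow> 'a" where
  "vwp_sum q a b c n = (\<Sum>k\<le>n. vwp_weight a n k * wp_ratio_prod q a b c k)"

definition param_shift :: "(nat \<Rightarrow> 'a::field_char_0) \<Rightarrow> nat \<Rightarrow> nat \<Rightarrow> 'a" where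
  "param_shift b j = (\<lambda>r. b (Suc r) + of_nat j)"

definition vwp_peel_coeff :: "'a::field_char_0 \<Rightarrow> 'a \<Rightarrow> 'a \<Rightarrow> nat \<Rightarrow> nat \<Rightarrow> 'a" where
  "vwp_peel_coeff a b1 c1 n j =
     pochhammer (1 + a - b1 - c1) j / (fact j * pochhammer (1 + a - b1) j * pochhammer (1 + a - c1) j)
     * (pochhammer a (2 * j) * pochhammer (- of_nat n) j * (-1)^j / pochhammer (1 + a + of_nat n) j)"

lemma wp_ratio_saalschuetz:
  fixes a b c :: "'a::field_char_0"
  assumes "pochhammer (1 + a - b) k \<noteq> 0" "pochhammer (1 + a - c) k \<noteq> 0"
  shows "wp_ratio a b c k
       = (\<Sum>j\<le>k. pochhammer (- of_nat k) j * pochhammer (a + of_nat k) j * pochhammer (1 + a - b - c) j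
            / (fact j * pochhammer (1 + a - b) j * pochhammer (1 + a - c) j))"
proof -
  have balanced: "1 + (a + of_nat k) + (1 + a - b - c) - (1 + a - b) - of_nat k = 1 + a - c"
    by simp
  have "pochhammer (1 + a - b - (a + of_nat k)) k = (-1)^k * pochhammer b k"
    and "pochhammer (1 + a - b - (a + of_nat k) - (1 + a - b - c)) k = (-1)^k * pochhammer (1 + a - c) k"
    using pochhammer_reflect[of "1 + a - b - (a + of_nat k)" k]
      pochhammer_reflect[of "1 + a - b - (a + of_nat k) - (1 + a - b - c)" k]
    by (simp_all add: algebra_simps)
  with pfaff_saalschuetz[of "1 + a - b" k "a + of_nat k" "1 + a - b - c"] assms show ?thesis
    unfolding balanced wp_ratio_def by (simp add: field_simps)
qed

lemma wp_ratio_add: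
  "wp_ratio a b c (j + l) = wp_ratio a b c j * wp_ratio (a + 2 * of_nat j) (b + of_nat j) (c + of_nat j) l"
proof -
  have shifted: "1 + (a + 2 * of_nat j) - (x + of_nat j) = (1 + a - x) + of_nat j" for x :: 'a
    by simp
  show ?thesis
    unfolding wp_ratio_def pochhammer_product' shifted by (simp add: divide_inverse mult_ac)
qed

lemma wp_ratio_prod_add:
  "wp_ratio_prod q a b c (j + l)
     = wp_ratio_prod q a b c j * wp_ratio_prod q (a + 2 * of_nat j) (\<lambda>r. b r + of_nat j) (\<lambda>r. c r + of_nat j) l"
  unfolding wp_ratio_prod_def wp_ratio_add prod.distrib by simp

lemma wp_ratio_prod_Suc:
  "wp_ratio_prod (Suc q) a b c k
     = wp_ratio a (b 1) (c 1) k * wp_ratio_prod q a (\<lambda>r. b (Suc r)) (\<lambda>r. c (Suc r)) k"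
  unfolding wp_ratio_prod_def by (subst prod.lessThan_Suc_shift) simp

lemma wp_ratio_prod_eq_prod_atLeastLessThan:
  "wp_ratio_prod q a b c k = (\<Prod>j\<in>{1..<q+1}. wp_ratio a (b j) (c j) k)"
proof -
  have "{1..<q+1} = {Suc 0..<Suc q}"
    by simp
  then show ?thesis
    unfolding wp_ratio_prod_def by (simp only: prod.shift_bounds_Suc_ivl atLeast0LessThan)
qed

lemma wp_ratio_prod_regroup:
  assumes "1 \<le> m"
  shows "wp_ratio_prod (Suc m) a (\<lambda>r. b (Suc r)) (\<lambda>r. c (Suc r)) j
     = pochhammer (b 2) j * pochhammer (c 2) j
       * (pochhammer (b (m + 2)) j * pochhammer (c (m + 2)) j
          / (pochhammer (1 + a - b (m + 1)) j * pochhammer (1 + a - c (m + 1)) j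
             * (pochhammer (1 + a - b (m + 2)) j * pochhammer (1 + a - c (m + 2)) j)))
       * (\<Prod>k=1..m-1. pochhammer (b (k + 2)) j * pochhammer (c (k + 2)) j
            / (pochhammer (1 + a - b (k + 1)) j * pochhammer (1 + a - c (k + 1)) j))"
  using prod_ratio_regroup[OF assms, of "\<lambda>k. pochhammer (b k) j * pochhammer (c k) j"
      "\<lambda>k. pochhammer (1 + a - b k) j * pochhammer (1 + a - c k) j"]
  by (simp add: wp_ratio_prod_def wp_ratio_def numeral_2_eq_2)

lemma pochhammer_vwp_denominator_split:
  assumes "j \<le> n"
  shows "pochhammer (1 + a + of_nat n :: 'a::comm_ring_1) (j + l)
       = pochhammer (1 + a + of_nat n) j * pochhammer (1 + (a + 2 * of_nat j) + of_nat (n - j)) l"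
  using assms by (simp add: pochhammer_product' of_nat_diff algebra_simps)

lemma vwp_weight_add:
  fixes a :: "'a::field_char_0"
  assumes jl: "j + l \<le> n" and a_n: "pochhammer (1 + a + of_nat n) n \<noteq> 0"
  shows "vwp_weight a n (j + l)
           * (pochhammer (- of_nat (j + l)) j * pochhammer (a + of_nat (j + l)) j)
       = pochhammer a (2 * j) * pochhammer (- of_nat n) j * (-1)^j / pochhammer (1 + a + of_nat n) j
           * vwp_weight (a + 2 * of_nat j) (n - j) l"
proof -
  have top: "pochhammer a (j + l) * pochhammer (a + of_nat (j + l)) j
      = pochhammer a (2 * j) * pochhammer (a + 2 * of_nat j) l"
  proof -
    have "pochhammer a (j + l) * pochhammer (a + of_nat (j + l)) j = pochhammer a ((j + l) + j)"
      by (rule pochhammer_product'[symmetric])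
    also have "(j + l) + j = 2 * j + l"
      by simp
    finally show ?thesis
      by (simp add: pochhammer_product')
  qed
  have minus_n: "pochhammer (- of_nat n :: 'a) (j + l) = pochhammer (- of_nat n) j * pochhammer (- of_nat (n - j)) l"
    using jl by (intro pochhammer_minus_of_nat_product) simp
  have bottom: "pochhammer (1 + a + of_nat n) (j + l)
      = pochhammer (1 + a + of_nat n) j * pochhammer (1 + (a + 2 * of_nat j) + of_nat (n - j)) l"
    using jl by (intro pochhammer_vwp_denominator_split) simp
  have "pochhammer (1 + a + of_nat n) (j + l) \<noteq> 0"
    using pochhammer_neq_0_mono[OF a_n jl] .
  then have nonzero: "pochhammer (1 + a + of_nat n) j \<noteq> 0"
    "pochhammer (1 + (a + 2 * of_nat j) + of_nat (n - j)) l \<noteq> 0"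
    unfolding bottom by auto
  have two: "a + 2 * of_nat (j + l) = (a + 2 * of_nat j) + 2 * of_nat l"
    by simp
  have "vwp_weight a n (j + l)
           * (pochhammer (- of_nat (j + l)) j * pochhammer (a + of_nat (j + l)) j)
      = (pochhammer a (j + l) * pochhammer (a + of_nat (j + l)) j) * (a + 2 * of_nat (j + l))
          * pochhammer (- of_nat n) (j + l) * pochhammer (- of_nat (j + l)) j
          / (fact (j + l) * pochhammer (1 + a + of_nat n) (j + l))"
    unfolding vwp_weight_def by (simp add: field_simps)
  also have "\<dots> = pochhammer a (2 * j) * pochhammer (- of_nat n) j * (-1)^j / pochhammer (1 + a + of_nat n) j
           * vwp_weight (a + 2 * of_nat j) (n - j) l"
    unfolding top two minus_n bottom pochhammer_minus_of_nat_add vwp_weight_def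
    using nonzero by (simp add: field_simps)
  finally show ?thesis .
qed

lemma vwp_sum_Suc:
  fixes a :: "'a::field_char_0"
  assumes b1: "pochhammer (1 + a - b 1) n \<noteq> 0" and c1: "pochhammer (1 + a - c 1) n \<noteq> 0"
    and a_n: "pochhammer (1 + a + of_nat n) n \<noteq> 0"
  shows "vwp_sum (Suc q) a b c n
       = (\<Sum>j\<le>n. vwp_peel_coeff a (b 1) (c 1) n j * wp_ratio_prod q a (\<lambda>r. b (Suc r)) (\<lambda>r. c (Suc r)) j
            * vwp_sum q (a + 2 * of_nat j) (param_shift b j) (param_shift c j) (n - j))"
proof -
  define b' c' where "b' = (\<lambda>r. b (Suc r))" and "c' = (\<lambda>r. c (Suc r))"
  define u where "u j = pochhammer (1 + a - b 1 - c 1) j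
      / (fact j * pochhammer (1 + a - b 1) j * pochhammer (1 + a - c 1) j)" for j
  let ?t = "\<lambda>k j. vwp_weight a n k * (pochhammer (- of_nat k) j * pochhammer (a + of_nat k) j)
      * u j * wp_ratio_prod q a b' c' k"
  have "vwp_sum (Suc q) a b c n = (\<Sum>k\<le>n. \<Sum>j\<le>k. ?t k j)"
    unfolding vwp_sum_def wp_ratio_prod_Suc b'_def[symmetric] c'_def[symmetric]
  proof (rule sum.cong)
    fix k assume "k \<in> {..n}"
    then have "wp_ratio a (b 1) (c 1) k
        = (\<Sum>j\<le>k. pochhammer (- of_nat k) j * pochhammer (a + of_nat k) j * u j)"
      unfolding u_def using pochhammer_neq_0_mono[OF b1] pochhammer_neq_0_mono[OF c1]
      by (subst wp_ratio_saalschuetz) (auto simp: mult.assoc)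
    then show "vwp_weight a n k * (wp_ratio a (b 1) (c 1) k * wp_ratio_prod q a b' c' k)
        = (\<Sum>j\<le>k. ?t k j)"
      by (simp add: sum_distrib_left sum_distrib_right mult_ac)
  qed simp
  also have "\<dots> = (\<Sum>j\<le>n. \<Sum>l\<le>n - j. ?t (j + l) j)"
    by (rule sum_triangle_swap)
  also have "\<dots> = (\<Sum>j\<le>n. vwp_peel_coeff a (b 1) (c 1) n j * wp_ratio_prod q a b' c' j
      * vwp_sum q (a + 2 * of_nat j) (param_shift b j) (param_shift c j) (n - j))"
    unfolding vwp_sum_def sum_distrib_left
  proof (intro sum.cong refl)
    fix j l assume "j \<in> {..n}" "l \<in> {..n - j}"
    then have jl: "j + l \<le> n"
      by simp
    have shift: "(\<lambda>r. b' r + of_nat j) = param_shift b j" "(\<lambda>r. c' r + of_nat j) = param_shift c j"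
      by (auto simp: param_shift_def b'_def c'_def)
    show "?t (j + l) j = vwp_peel_coeff a (b 1) (c 1) n j * wp_ratio_prod q a b' c' j
        * (vwp_weight (a + 2 * of_nat j) (n - j) l
           * wp_ratio_prod q (a + 2 * of_nat j) (param_shift b j) (param_shift c j) l)"
      unfolding vwp_weight_add[OF jl a_n] wp_ratio_prod_add shift vwp_peel_coeff_def u_def[symmetric]
      by (simp add: mult_ac)
  qed
  finally show ?thesis
    unfolding b'_def c'_def .
qed

lemma vwp_weight_partial_sum:
  fixes a :: "'a::field_char_0"
  assumes "K \<le> n" and a_n: "pochhammer (1 + a + of_nat n) n \<noteq> 0"
  shows "(\<Sum>k\<le>K. vwp_weight a n k)
       = pochhammer a (Suc K) * pochhammer (1 - of_nat n) K / (fact K * pochhammer (1 + a + of_nat n) K)"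
  using assms(1)
proof (induction K)
  case 0
  then show ?case
    by (simp add: vwp_weight_def)
next
  case (Suc K)
  define F where "F K = pochhammer a (Suc K) * pochhammer (1 - of_nat n) K
    / (fact K * pochhammer (1 + a + of_nat n) K)" for K
  define x N where "x = (of_nat K :: 'a)" and "N = (of_nat n :: 'a)"
  define D where "D = (x + 1) * (1 + a + N + x)"
  have "pochhammer (1 + a + of_nat n) (Suc K) \<noteq> 0"
    using pochhammer_neq_0_mono[OF a_n Suc.prems] .
  moreover have "x + 1 \<noteq> 0"
    unfolding x_def by (metis of_nat_Suc of_nat_neq_0 add.commute)
  ultimately have "D \<noteq> 0"
    by (simp add: D_def pochhammer_Suc x_def N_def add_ac)
  have F_Suc: "F (Suc K) = F K * ((a + x + 1) * (1 - N + x) / D)"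
    by (simp add: F_def D_def x_def N_def pochhammer_Suc divide_inverse mult_ac add_ac)
  have minus_n: "pochhammer (- of_nat n) (Suc K) = - N * pochhammer (1 - of_nat n) K"
    by (simp add: N_def pochhammer_rec add_ac)
  have weight_Suc: "vwp_weight a n (Suc K) = F K * ((a + 2 * (x + 1)) * (- N) / D)"
    unfolding vwp_weight_def minus_n
    by (simp add: F_def D_def x_def N_def pochhammer_Suc divide_inverse mult_ac add_ac)
  have "D + (a + 2 * (x + 1)) * (- N) = (a + x + 1) * (1 - N + x)"
    unfolding D_def by algebra
  then have "1 + (a + 2 * (x + 1)) * (- N) / D = (a + x + 1) * (1 - N + x) / D"
    using \<open>D \<noteq> 0\<close> by (metis add_divide_distrib divide_self)
  then have "F K + vwp_weight a n (Suc K) = F (Suc K)"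
    unfolding F_Suc weight_Suc by (metis distrib_left mult.right_neutral)
  then show ?case
    using Suc by (simp add: F_def)
qed

lemma pochhammer_vwp_prefactor:
  fixes a :: "'a::comm_ring_1"
  assumes "n = j + r"
  shows "pochhammer a (2 * j) * (a + 2 * of_nat j) * pochhammer (1 + (a + 2 * of_nat j)) r
       = a * pochhammer (1 + a) n * pochhammer (1 + a + of_nat n) j"
proof -
  have "pochhammer a (2 * j + Suc r)
      = pochhammer a (2 * j) * ((a + 2 * of_nat j) * pochhammer (1 + (a + 2 * of_nat j)) r)"
    unfolding pochhammer_product' pochhammer_rec by (simp add: add_ac)
  also have "2 * j + Suc r = Suc n + j"
    using assms by simp
  also have "pochhammer a (Suc n + j) = a * pochhammer (1 + a) n * pochhammer (1 + a + of_nat n) j"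
    unfolding pochhammer_product' pochhammer_rec by (simp add: add_ac)
  finally show ?thesis
    by (simp add: mult_ac)
qed

lemma pochhammer_vwp_prefactor_divide:
  fixes a :: "'a::field_char_0"
  assumes "n = j + r" and "pochhammer (1 + a + of_nat n) j \<noteq> 0"
  shows "a * pochhammer (1 + a) n = pochhammer a (2 * j) * (a + 2 * of_nat j)
      * pochhammer (1 + (a + 2 * of_nat j)) r / pochhammer (1 + a + of_nat n) j"
  using pochhammer_vwp_prefactor[OF assms(1), of a] assms(2) by (simp add: field_simps)

lemma vwp_sum_0:
  fixes a :: "'a::field_char_0"
  assumes "pochhammer (1 + a + of_nat n) n \<noteq> 0"
  shows "vwp_sum 0 a b c n = (if n = 0 then a else 0)"
proof (cases n)
  case 0
  then show ?thesis
    by (simp add: vwp_sum_def wp_ratio_prod_def vwp_weight_def)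
next
  case (Suc m)
  have "pochhammer (1 - of_nat n :: 'a) n = 0"
    unfolding pochhammer_eq_0_iff using Suc by (intro exI[of _ m]) auto
  with vwp_weight_partial_sum[OF order.refl assms] Suc show ?thesis
    by (simp add: vwp_sum_def wp_ratio_prod_def)
qed

theorem dougall_5F4:
  fixes a :: "'a::field_char_0"
  assumes b1: "pochhammer (1 + a - b 1) n \<noteq> 0" and c1: "pochhammer (1 + a - c 1) n \<noteq> 0"
    and a_n: "pochhammer (1 + a + of_nat n) n \<noteq> 0"
  shows "vwp_sum 1 a b c n = a * pochhammer (1 + a) n * pochhammer (1 + a - b 1 - c 1) n
           / (pochhammer (1 + a - b 1) n * pochhammer (1 + a - c 1) n)"
proof -
  have "vwp_sum (Suc 0) a b c n = (\<Sum>j\<le>n. if j = n then vwp_peel_coeff a (b 1) (c 1) n n * (a + 2 * of_nat n) else 0)"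
    unfolding vwp_sum_Suc[where a = a and b = b and c = c and n = n and q = 0, OF b1 c1 a_n]
  proof (rule sum.cong)
    fix j assume "j \<in> {..n}"
    then have "pochhammer (1 + (a + 2 * of_nat j) + of_nat (n - j)) (n - j) \<noteq> 0"
      using a_n pochhammer_vwp_denominator_split[of j n a "n - j"] by auto
    from vwp_sum_0[OF this] \<open>j \<in> {..n}\<close>
    show "vwp_peel_coeff a (b 1) (c 1) n j * wp_ratio_prod 0 a (\<lambda>r. b (Suc r)) (\<lambda>r. c (Suc r)) j
        * vwp_sum 0 (a + 2 * of_nat j) (param_shift b j) (param_shift c j) (n - j)
      = (if j = n then vwp_peel_coeff a (b 1) (c 1) n n * (a + 2 * of_nat n) else 0)"
      by (auto simp: wp_ratio_prod_def)
  qed simp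
  also have "\<dots> = vwp_peel_coeff a (b 1) (c 1) n n * (a + 2 * of_nat n)"
    by simp
  also have "\<dots> = a * pochhammer (1 + a) n * pochhammer (1 + a - b 1 - c 1) n
           / (pochhammer (1 + a - b 1) n * pochhammer (1 + a - c 1) n)"
  proof -
    have "pochhammer a (2 * n) * (a + 2 * of_nat n) = a * pochhammer (1 + a) n * pochhammer (1 + a + of_nat n) n"
      using pochhammer_vwp_prefactor[of n n 0 a] by simp
    moreover have "pochhammer (- of_nat n) n * (-1)^n = (fact n :: 'a)"
      by (simp add: pochhammer_same)
    ultimately show ?thesis
      using a_n unfolding vwp_peel_coeff_def
      by (simp add: divide_inverse mult_ac) (simp add: field_simps)
  qed
  finally show ?thesis
    by simp
qed

lemma whipple_term:
  fixes a b1 c1 b2 c2 :: "'a::field_char_0"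
  assumes n: "n = j + r"
    and b1: "pochhammer (1 + a - b1) j \<noteq> 0" and c1: "pochhammer (1 + a - c1) j \<noteq> 0"
    and b2: "pochhammer (1 + a - b2) n \<noteq> 0" and c2: "pochhammer (1 + a - c2) n \<noteq> 0"
    and a_n: "pochhammer (1 + a + of_nat n) n \<noteq> 0" and bc2: "pochhammer (b2 + c2 - a - of_nat n) n \<noteq> 0"
  shows "vwp_peel_coeff a b1 c1 n j * wp_ratio a b2 c2 j
      * ((a + 2 * of_nat j) * pochhammer (1 + (a + 2 * of_nat j)) r * pochhammer (1 + a - b2 - c2) r
         / (pochhammer (1 + a - b2 + of_nat j) r * pochhammer (1 + a - c2 + of_nat j) r))
    = a * pochhammer (1 + a) n * pochhammer (1 + a - b2 - c2) n
        / (pochhammer (1 + a - b2) n * pochhammer (1 + a - c2) n)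
      * (pochhammer (- of_nat n) j * pochhammer c2 j * pochhammer b2 j * pochhammer (1 + a - b1 - c1) j
         / (fact j * pochhammer (b2 + c2 - a - of_nat n) j * pochhammer (1 + a - b1) j
            * pochhammer (1 + a - c1) j))"
proof -
  have split_b2: "pochhammer (1 + a - b2) n = pochhammer (1 + a - b2) j * pochhammer (1 + a - b2 + of_nat j) r"
    and split_c2: "pochhammer (1 + a - c2) n = pochhammer (1 + a - c2) j * pochhammer (1 + a - c2 + of_nat j) r"
    unfolding n by (rule pochhammer_product')+
  have split_bc2: "pochhammer (1 + a - b2 - c2) n
      = pochhammer (1 + a - b2 - c2) r * ((-1)^j * pochhammer (b2 + c2 - a - of_nat n) j)"
    using pochhammer_add_reflect[of "1 + a - b2 - c2" r j] unfolding n by (simp add: algebra_simps)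
  have nonzero: "pochhammer (1 + a - b2) j \<noteq> 0" "pochhammer (1 + a - b2 + of_nat j) r \<noteq> 0"
    "pochhammer (1 + a - c2) j \<noteq> 0" "pochhammer (1 + a - c2 + of_nat j) r \<noteq> 0"
    "pochhammer (1 + a + of_nat n) j \<noteq> 0" "pochhammer (b2 + c2 - a - of_nat n) j \<noteq> 0"
    using b2 c2 pochhammer_neq_0_mono[OF a_n, of j] pochhammer_neq_0_mono[OF bc2, of j] n
    unfolding split_b2 split_c2 by auto
  show ?thesis
    unfolding pochhammer_vwp_prefactor_divide[OF n nonzero(5)] split_b2 split_c2 split_bc2 vwp_peel_coeff_def wp_ratio_def
    using nonzero b1 c1 by (simp add: field_simps)
qed

theorem whipple_7F6:
  fixes a :: "'a::field_char_0"
  assumes b1: "pochhammer (1 + a - b 1) n \<noteq> 0" and c1: "pochhammer (1 + a - c 1) n \<noteq> 0"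
    and b2: "pochhammer (1 + a - b 2) n \<noteq> 0" and c2: "pochhammer (1 + a - c 2) n \<noteq> 0"
    and a_n: "pochhammer (1 + a + of_nat n) n \<noteq> 0"
    and bc2: "pochhammer (b 2 + c 2 - a - of_nat n) n \<noteq> 0"
  shows "vwp_sum 2 a b c n = a * pochhammer (1 + a) n * pochhammer (1 + a - b 2 - c 2) n
           / (pochhammer (1 + a - b 2) n * pochhammer (1 + a - c 2) n)
         * (\<Sum>j\<le>n. pochhammer (- of_nat n) j * pochhammer (c 2) j * pochhammer (b 2) j
              * pochhammer (1 + a - b 1 - c 1) j
              / (fact j * pochhammer (b 2 + c 2 - a - of_nat n) j * pochhammer (1 + a - b 1) j
                 * pochhammer (1 + a - c 1) j))"
    (is "_ = ?c * (\<Sum>j\<le>n. ?t j)")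
proof -
  have "vwp_peel_coeff a (b 1) (c 1) n j * wp_ratio_prod 1 a (\<lambda>r. b (Suc r)) (\<lambda>r. c (Suc r)) j
      * vwp_sum 1 (a + 2 * of_nat j) (param_shift b j) (param_shift c j) (n - j) = ?c * ?t j"
    if j: "j \<le> n" for j
  proof -
    define r where "r = n - j"
    then have n: "n = j + r"
      using j by simp
    have shifted: "param_shift b j (Suc 0) = b 2 + of_nat j" "param_shift c j (Suc 0) = c 2 + of_nat j"
      by (simp_all add: param_shift_def numeral_2_eq_2)
    have params: "1 + (a + 2 * of_nat j) - (b 2 + of_nat j) = 1 + a - b 2 + of_nat j"
      "1 + (a + 2 * of_nat j) - (c 2 + of_nat j) = 1 + a - c 2 + of_nat j"
      "1 + (a + 2 * of_nat j) - (b 2 + of_nat j) - (c 2 + of_nat j) = 1 + a - b 2 - c 2"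
      "1 + (a + 2 * of_nat j) + of_nat r = 1 + a + of_nat n + of_nat j"
      using n by simp_all
    have "vwp_sum 1 (a + 2 * of_nat j) (param_shift b j) (param_shift c j) r
        = (a + 2 * of_nat j) * pochhammer (1 + (a + 2 * of_nat j)) r * pochhammer (1 + a - b 2 - c 2) r
          / (pochhammer (1 + a - b 2 + of_nat j) r * pochhammer (1 + a - c 2 + of_nat j) r)"
      using pochhammer_shift_neq_0[OF b2 j] pochhammer_shift_neq_0[OF c2 j] pochhammer_shift_neq_0[OF a_n j]
      unfolding r_def[symmetric] by (subst dougall_5F4) (simp_all add: shifted params)
    moreover have "wp_ratio_prod 1 a (\<lambda>r. b (Suc r)) (\<lambda>r. c (Suc r)) j = wp_ratio a (b 2) (c 2) j"
      by (simp add: wp_ratio_prod_def numeral_2_eq_2)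
    ultimately show ?thesis
      using whipple_term[OF n pochhammer_neq_0_mono[OF b1 j] pochhammer_neq_0_mono[OF c1 j] b2 c2 a_n bc2]
      unfolding r_def by simp
  qed
  then have "vwp_sum (Suc 1) a b c n = (\<Sum>j\<le>n. ?c * ?t j)"
    unfolding vwp_sum_Suc[where a = a and b = b and c = c and n = n, OF b1 c1 a_n]
    by (intro sum.cong) auto
  then show ?thesis
    by (simp add: sum_distrib_left numeral_2_eq_2)
qed

section \<open>Chains\<close>

lemma chains_mono:
  assumes "i \<in> chains m n" "k \<le> l" "l \<le> m"
  shows "i k \<le> i l"
  using assms(2,3)
proof (induction l)
  case (Suc l)
  show ?case
  proof (cases "k = Suc l")
    case False
    then have "i k \<le> i l"
      using Suc by simp
    also have "i l \<le> i (Suc l)"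
      using assms(1) Suc.prems unfolding chains_def by force
    finally show ?thesis .
  qed simp
qed simp

lemma chains_le: "i \<in> chains m n \<Longrightarrow> i k \<le> n"
  using chains_mono[of i m n k m] by (cases "k \<le> m") (auto simp: chains_def)

lemma finite_chains: "finite (chains m n)"
proof (rule finite_subset)
  show "chains m n \<subseteq> {i. \<forall>k. (k \<in> {..m} \<longrightarrow> i k \<in> {..n}) \<and> (k \<notin> {..m} \<longrightarrow> i k = 0)}"
  proof
    fix i assume i: "i \<in> chains m n"
    then show "i \<in> {i. \<forall>k. (k \<in> {..m} \<longrightarrow> i k \<in> {..n}) \<and> (k \<notin> {..m} \<longrightarrow> i k = 0)}"
      using chains_le[OF i] by (simp add: chains_def)
  qed
qed (intro finite_set_of_finite_funs finite_atMost)

lemma chains_0: "chains 0 n = {\<lambda>_. 0}"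
  by (auto simp: chains_def fun_eq_iff) (metis gr0I)

definition chain_cons :: "nat \<Rightarrow> nat \<Rightarrow> (nat \<Rightarrow> nat) \<Rightarrow> nat \<Rightarrow> nat" where
  "chain_cons m j i = (\<lambda>k. if k = 0 then 0 else if k \<le> Suc m then j + i (k - 1) else 0)"

definition chain_tail :: "nat \<Rightarrow> (nat \<Rightarrow> nat) \<Rightarrow> nat \<Rightarrow> nat" where
  "chain_tail m i = (\<lambda>k. if k \<le> m then i (Suc k) - i 1 else 0)"

lemma chain_cons_tail:
  assumes "i \<in> chains (Suc m) n"
  shows "chain_cons m (i 1) (chain_tail m i) = i"
proof
  fix k
  have zero: "i 0 = 0" "\<forall>k > Suc m. i k = 0"
    using assms by (simp_all add: chains_def)
  consider "k = 0" | "Suc m < k" | "0 < k" "k \<le> Suc m"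
    by (meson neq0_conv not_less)
  then show "chain_cons m (i 1) (chain_tail m i) k = i k"
  proof cases
    case 3
    then have "i 1 \<le> i k" "k - 1 \<le> m" "Suc (k - 1) = k"
      using chains_mono[OF assms, of 1 k] by auto
    with 3 show ?thesis
      by (simp add: chain_cons_def chain_tail_def)
  qed (use zero in \<open>simp_all add: chain_cons_def\<close>)
qed

lemma chain_tail_cons:
  assumes "i \<in> chains m l"
  shows "chain_tail m (chain_cons m j i) = i"
proof
  fix k
  show "chain_tail m (chain_cons m j i) k = i k"
    using assms by (cases "k \<le> m") (simp_all add: chain_cons_def chain_tail_def chains_def)
qed

lemma chain_tail_in_chains:
  assumes "i \<in> chains (Suc m) n"
  shows "chain_tail m i \<in> chains m (n - i 1)"
proof -
  have "i (Suc (k - 1)) - i 1 \<le> i (Suc k) - i 1" if "k \<in> {1..m}" for k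
    using that chains_mono[OF assms, of "Suc (k - 1)" "Suc k"] by simp
  moreover have "i (Suc m) - i 1 \<le> n - i 1"
    using assms by (simp add: chains_def diff_le_mono)
  ultimately show ?thesis
    by (simp add: chains_def chain_tail_def)
qed

lemma chain_cons_in_chains:
  assumes "j \<le> n" and i: "i \<in> chains m (n - j)"
  shows "chain_cons m j i \<in> chains (Suc m) n"
proof -
  have "chain_cons m j i (k - 1) \<le> chain_cons m j i k" if "k \<in> {1..Suc m}" for k
  proof (cases "k = 1")
    case False
    with that have "k - 1 \<le> m"
      by auto
    then have "i (k - 1 - 1) \<le> i (k - 1)"
      using chains_mono[OF i, of "k - 1 - 1" "k - 1"] by simp
    with that False show ?thesis
      by (simp add: chain_cons_def)
  qed (simp add: chain_cons_def)
  moreover have "i m \<le> n - j"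
    using i by (simp add: chains_def)
  then have "chain_cons m j i (Suc m) \<le> n"
    using assms(1) by (simp add: chain_cons_def)
  ultimately show ?thesis
    by (simp add: chains_def chain_cons_def)
qed

lemma sum_chains_Suc:
  "(\<Sum>i\<in>chains (Suc m) n. f i) = (\<Sum>j\<le>n. \<Sum>i\<in>chains m (n - j). f (chain_cons m j i))"
proof -
  have "(\<Sum>i\<in>chains (Suc m) n. f i)
      = (\<Sum>(j, i)\<in>Sigma {..n} (\<lambda>j. chains m (n - j)). f (chain_cons m j i))"
  proof (rule sum.reindex_bij_witness[where j = "\<lambda>i. (i 1, chain_tail m i)" and i = "\<lambda>(j, i). chain_cons m j i"])
    fix i assume i: "i \<in> chains (Suc m) n"
    show "(case (i 1, chain_tail m i) of (j, i) \<Rightarrow> chain_cons m j i) = i"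
      using chain_cons_tail[OF i] by simp
    show "(i 1, chain_tail m i) \<in> Sigma {..n} (\<lambda>j. chains m (n - j))"
      using chain_tail_in_chains[OF i] chains_le[OF i] by simp
  next
    fix p assume "p \<in> Sigma {..n} (\<lambda>j. chains m (n - j))"
    then obtain j i where p: "p = (j, i)" and j: "j \<le> n" and i: "i \<in> chains m (n - j)"
      by auto
    have "chain_cons m j i 1 = j"
      using i by (simp add: chain_cons_def chains_def)
    then show "((case p of (j, i) \<Rightarrow> chain_cons m j i) 1, chain_tail m (case p of (j, i) \<Rightarrow> chain_cons m j i)) = p"
      using chain_tail_cons[OF i] p by simp
    show "(case p of (j, i) \<Rightarrow> chain_cons m j i) \<in> chains (Suc m) n"
      using chain_cons_in_chains[OF j i] p by simp
  qed (metis case_prod_conv chain_cons_tail)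
  then show ?thesis
    by (simp add: sum.Sigma finite_chains)
qed

lemma sum_chains_1: "(\<Sum>i\<in>chains 1 n. f i) = (\<Sum>j\<le>n. f (chain_cons 0 j (\<lambda>_. 0)))"
  using sum_chains_Suc[of f 0 n] by (simp add: chains_0)

section \<open>The very-well-poised sum as a sum over chains\<close>

definition chain_prefactor :: "nat \<Rightarrow> 'a::field_char_0 \<Rightarrow> (nat \<Rightarrow> 'a) \<Rightarrow> (nat \<Rightarrow> 'a) \<Rightarrow> nat \<Rightarrow> 'a" where
  "chain_prefactor m a b c n =
     (pochhammer (1 + a) n * pochhammer (1 + a - b m - c (m+1)) n
        * pochhammer (1 + a - b (m+1) - c (m+1)) n * pochhammer (1 + a - c m - c (m+1)) n)
      / (pochhammer (1 + a - b m) n * pochhammer (1 + a - b (m+1)) n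
        * pochhammer (1 + a - c m) n * pochhammer (1 + a - c (m+1)) n)"

definition chain_last_factor ::
    "nat \<Rightarrow> 'a::field_char_0 \<Rightarrow> (nat \<Rightarrow> 'a) \<Rightarrow> (nat \<Rightarrow> 'a) \<Rightarrow> nat \<Rightarrow> (nat \<Rightarrow> nat) \<Rightarrow> 'a" where
  "chain_last_factor m a b c n i =
     (pochhammer (- of_nat n) (i m) * pochhammer (c (m+1)) (i m))
       / (pochhammer (- a - of_nat n + b m + c (m+1)) (i m)
          * pochhammer (- a - of_nat n + b (m+1) + c (m+1)) (i m))
     * (pochhammer (- 1 - 2 * a - of_nat n + b m + b (m+1) + c m + c (m+1)) (i m)
        * pochhammer (- a - of_nat n + c (m+1)) (i m - i (m-1))
        * pochhammer (b (m+1)) (i (m-1)))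
       / (pochhammer (- a - of_nat n + c m + c (m+1)) (i m)
          * fact (i m - i (m-1))
          * pochhammer (- 1 - 2 * a - of_nat n + b m + b (m+1) + c m + c (m+1)) (i (m-1)))"

definition chain_factor :: "'a::field_char_0 \<Rightarrow> (nat \<Rightarrow> 'a) \<Rightarrow> (nat \<Rightarrow> 'a) \<Rightarrow> (nat \<Rightarrow> nat) \<Rightarrow> nat \<Rightarrow> 'a" where
  "chain_factor a b c i k =
     (pochhammer (1 + a - b k - c k) (i k - i (k-1))
      * pochhammer (b (k+1)) (i k) * pochhammer (c (k+1)) (i k))
     / (fact (i k - i (k-1)) * pochhammer (1 + a - b k) (i k) * pochhammer (1 + a - c k) (i k))"

definition chain_summand ::
    "nat \<Rightarrow> 'a::field_char_0 \<Rightarrow> (nat \<Rightarrow> 'a) \<Rightarrow> (nat \<Rightarrow> 'a) \<Rightarrow> nat \<Rightarrow> (nat \<Rightarrow> nat) \<Rightarrow> 'a" where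
  "chain_summand m a b c n i = chain_last_factor m a b c n i * (\<Prod>k=1..m-1. chain_factor a b c i k)"

lemma chain_summand_1:
  "chain_summand 1 a b c n (chain_cons 0 j (\<lambda>_. 0))
     = pochhammer (- of_nat n) j * pochhammer (c 2) j * pochhammer (- a - of_nat n + c 2) j
         * pochhammer (- 1 - 2 * a - of_nat n + b 1 + b 2 + c 1 + c 2) j
       / (fact j * pochhammer (- a - of_nat n + b 2 + c 2) j * pochhammer (- a - of_nat n + b 1 + c 2) j
         * pochhammer (- a - of_nat n + c 1 + c 2) j)"
  by (simp add: chain_summand_def chain_last_factor_def chain_cons_def numeral_2_eq_2
      divide_inverse mult_ac)

theorem vwp_sum_2_eq_chain_sum:
  fixes a :: "'a::field_char_0"
  assumes b1: "pochhammer (1 + a - b 1) n \<noteq> 0" and c1: "pochhammer (1 + a - c 1) n \<noteq> 0"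
    and b2: "pochhammer (1 + a - b 2) n \<noteq> 0" and c2: "pochhammer (1 + a - c 2) n \<noteq> 0"
    and a_n: "pochhammer (1 + a + of_nat n) n \<noteq> 0"
    and X1: "pochhammer (- a - of_nat n + b 1 + c 2) n \<noteq> 0"
    and X2: "pochhammer (- a - of_nat n + b 2 + c 2) n \<noteq> 0"
    and X3: "pochhammer (- a - of_nat n + c 1 + c 2) n \<noteq> 0"
  shows "vwp_sum 2 a b c n = a * (chain_prefactor 1 a b c n * (\<Sum>i\<in>chains 1 n. chain_summand 1 a b c n i))"
proof -
  define A B C D E F where "A = c 2" and "B = b 2" and "C = 1 + a - b 1 - c 1"
    and "D = b 2 + c 2 - a - of_nat n" and "E = 1 + a - b 1" and "F = 1 + a - c 1"
  have balanced: "D + E + F = A + B + C + 1 - of_nat n"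
    by (simp add: A_def B_def C_def D_def E_def F_def)
  have D: "pochhammer D n \<noteq> 0"
    using X2 by (simp add: D_def algebra_simps)
  have E: "pochhammer E n \<noteq> 0" and F: "pochhammer F n \<noteq> 0"
    using b1 c1 by (simp_all add: E_def F_def)
  have EA: "pochhammer (E - A) n \<noteq> 0" and FA: "pochhammer (F - A) n \<noteq> 0"
    using X1 X3 pochhammer_reflect[of "E - A" n] pochhammer_reflect[of "F - A" n]
    by (simp_all add: A_def E_def F_def algebra_simps)
  have "vwp_sum 2 a b c n = a * pochhammer (1 + a) n * pochhammer (1 + a - b 2 - c 2) n
           / (pochhammer (1 + a - b 2) n * pochhammer (1 + a - c 2) n)
         * (\<Sum>j\<le>n. pochhammer (- of_nat n) j * pochhammer A j * pochhammer B j * pochhammer C j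
              / (fact j * pochhammer D j * pochhammer E j * pochhammer F j))"
    unfolding A_def B_def C_def D_def E_def F_def
    by (rule whipple_7F6[OF b1 c1 b2 c2 a_n]) (use D in \<open>simp add: D_def\<close>)
  also have "(\<Sum>j\<le>n. pochhammer (- of_nat n) j * pochhammer A j * pochhammer B j * pochhammer C j
              / (fact j * pochhammer D j * pochhammer E j * pochhammer F j))
      = pochhammer (E - A) n * pochhammer (F - A) n / (pochhammer E n * pochhammer F n)
        * (\<Sum>j\<le>n. chain_summand 1 a b c n (chain_cons 0 j (\<lambda>_. 0)))"
    unfolding sears_transformation[OF balanced D E F EA FA] chain_summand_1
    by (simp add: A_def B_def C_def D_def E_def F_def algebra_simps)
  finally show ?thesis
    unfolding sum_chains_1 chain_prefactor_def
    by (simp add: A_def E_def F_def numeral_2_eq_2 divide_inverse mult_ac)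
qed

definition vwp_admissible :: "nat \<Rightarrow> 'a::field_char_0 \<Rightarrow> (nat \<Rightarrow> 'a) \<Rightarrow> (nat \<Rightarrow> 'a) \<Rightarrow> nat \<Rightarrow> bool" where
  "vwp_admissible m a b c n \<longleftrightarrow>
     (\<forall>k\<in>{1..m+1}. pochhammer (1 + a - b k) n \<noteq> 0 \<and> pochhammer (1 + a - c k) n \<noteq> 0)
     \<and> pochhammer (1 + a + of_nat n) n \<noteq> 0
     \<and> pochhammer (- a - of_nat n + b m + c (m+1)) n \<noteq> 0
     \<and> pochhammer (- a - of_nat n + b (m+1) + c (m+1)) n \<noteq> 0
     \<and> pochhammer (- a - of_nat n + c m + c (m+1)) n \<noteq> 0
     \<and> pochhammer (- 1 - 2 * a - of_nat n + b m + b (m+1) + c m + c (m+1)) n \<noteq> 0"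

lemma vwp_admissible_shift:
  fixes a :: "'a::field_char_0"
  assumes adm: "vwp_admissible (Suc m) a b c n" and j: "j \<le> n"
  shows "vwp_admissible m (a + 2 * of_nat j) (param_shift b j) (param_shift c j) (n - j)"
proof -
  note shift = pochhammer_shift_neq_0[OF _ j]
  have n_j: "(of_nat (n - j) :: 'a) = of_nat n - of_nat j"
    using j by (simp add: of_nat_diff)
  have "pochhammer (1 + (a + 2 * of_nat j) - param_shift b j k) (n - j) \<noteq> 0
      \<and> pochhammer (1 + (a + 2 * of_nat j) - param_shift c j k) (n - j) \<noteq> 0" if "k \<in> {1..m+1}" for k
  proof -
    from that adm have "pochhammer (1 + a - b (Suc k)) n \<noteq> 0" "pochhammer (1 + a - c (Suc k)) n \<noteq> 0"
      by (auto simp: vwp_admissible_def)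
    from shift[OF this(1)] shift[OF this(2)] show ?thesis
      by (simp add: param_shift_def algebra_simps)
  qed
  moreover have "pochhammer (1 + (a + 2 * of_nat j) + of_nat (n - j)) (n - j) \<noteq> 0"
    using adm shift[of "1 + a + of_nat n"] unfolding vwp_admissible_def n_j by (simp add: algebra_simps)
  moreover have "pochhammer (- (a + 2 * of_nat j) - of_nat (n - j) + param_shift b j m + param_shift c j (m + 1)) (n - j) \<noteq> 0
      \<and> pochhammer (- (a + 2 * of_nat j) - of_nat (n - j) + param_shift b j (m + 1) + param_shift c j (m + 1)) (n - j) \<noteq> 0
      \<and> pochhammer (- (a + 2 * of_nat j) - of_nat (n - j) + param_shift c j m + param_shift c j (m + 1)) (n - j) \<noteq> 0
      \<and> pochhammer (- 1 - 2 * (a + 2 * of_nat j) - of_nat (n - j) + param_shift b j m + param_shift b j (m + 1)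
           + param_shift c j m + param_shift c j (m + 1)) (n - j) \<noteq> 0"
    using adm shift[of "- a - of_nat n + b (Suc m) + c (Suc (Suc m))"]
      shift[of "- a - of_nat n + b (Suc (Suc m)) + c (Suc (Suc m))"]
      shift[of "- a - of_nat n + c (Suc m) + c (Suc (Suc m))"]
      shift[of "- 1 - 2 * a - of_nat n + b (Suc m) + b (Suc (Suc m)) + c (Suc m) + c (Suc (Suc m))"]
    unfolding vwp_admissible_def param_shift_def n_j by (simp add: algebra_simps)
  ultimately show ?thesis
    unfolding vwp_admissible_def by blast
qed

lemma chain_prefactor_shift:
  fixes a :: "'a::field_char_0"
  assumes j: "j \<le> n"
    and b1: "pochhammer (1 + a - b (Suc m)) n \<noteq> 0" and b2: "pochhammer (1 + a - b (Suc (Suc m))) n \<noteq> 0"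
    and c1: "pochhammer (1 + a - c (Suc m)) n \<noteq> 0" and c2: "pochhammer (1 + a - c (Suc (Suc m))) n \<noteq> 0"
    and a_n: "pochhammer (1 + a + of_nat n) n \<noteq> 0"
  shows "a * chain_prefactor (Suc m) a b c n
     = pochhammer a (2 * j) * (-1)^j * pochhammer (- a - of_nat n + b (Suc m) + c (Suc (Suc m))) j
         * pochhammer (- a - of_nat n + b (Suc (Suc m)) + c (Suc (Suc m))) j
         * pochhammer (- a - of_nat n + c (Suc m) + c (Suc (Suc m))) j
       / (pochhammer (1 + a + of_nat n) j
          * pochhammer (1 + a - b (Suc m)) j * pochhammer (1 + a - c (Suc m)) j
          * pochhammer (1 + a - b (Suc (Suc m))) j * pochhammer (1 + a - c (Suc (Suc m))) j)
       * ((a + 2 * of_nat j) * chain_prefactor m (a + 2 * of_nat j) (param_shift b j) (param_shift c j) (n - j))"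
proof -
  define r where "r = n - j"
  then have n: "n = j + r"
    using j by simp
  define B1 B2 C1 C2 where "B1 = b (Suc m)" and "B2 = b (Suc (Suc m))"
    and "C1 = c (Suc m)" and "C2 = c (Suc (Suc m))"
  have split: "pochhammer (1 + a - x) n = pochhammer (1 + a - x) j * pochhammer (1 + a - x + of_nat j) r" for x
    unfolding n by (rule pochhammer_product')
  have reflect: "pochhammer (1 + a - x - y) n
      = pochhammer (1 + a - x - y) r * ((-1)^j * pochhammer (- a - of_nat n + x + y) j)" for x y
    using pochhammer_add_reflect[of "1 + a - x - y" r j] unfolding n by (simp add: algebra_simps)
  have shifted: "1 + (a + 2 * of_nat j) - (x + of_nat j) = 1 + a - x + of_nat j"
    "1 + (a + 2 * of_nat j) - (x + of_nat j) - (y + of_nat j) = 1 + a - x - y" for x y :: 'a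
    by simp_all
  have "pochhammer (1 + a - x) j \<noteq> 0" "pochhammer (1 + a - x + of_nat j) r \<noteq> 0"
    if "pochhammer (1 + a - x) n \<noteq> 0" for x
    using that unfolding split[of x] by auto
  note nonzero = this[OF b1] this[OF b2] this[OF c1] this[OF c2] pochhammer_neq_0_mono[OF a_n j]
  have lhs: "a * chain_prefactor (Suc m) a b c n = (a * pochhammer (1 + a) n)
      * (pochhammer (1 + a - B1 - C2) n * pochhammer (1 + a - B2 - C2) n * pochhammer (1 + a - C1 - C2) n
         / (pochhammer (1 + a - B1) n * pochhammer (1 + a - B2) n
            * pochhammer (1 + a - C1) n * pochhammer (1 + a - C2) n))"
    by (simp add: chain_prefactor_def B1_def B2_def C1_def C2_def mult_ac)
  have rhs: "chain_prefactor m (a + 2 * of_nat j) (param_shift b j) (param_shift c j) (n - j)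
      = pochhammer (1 + (a + 2 * of_nat j)) r
      * (pochhammer (1 + a - B1 - C2) r * pochhammer (1 + a - B2 - C2) r * pochhammer (1 + a - C1 - C2) r
         / (pochhammer (1 + a - B1 + of_nat j) r * pochhammer (1 + a - B2 + of_nat j) r
            * pochhammer (1 + a - C1 + of_nat j) r * pochhammer (1 + a - C2 + of_nat j) r))"
    unfolding chain_prefactor_def param_shift_def r_def[symmetric] Suc_eq_plus1[symmetric]
    unfolding B1_def[symmetric] B2_def[symmetric] C1_def[symmetric] C2_def[symmetric] shifted
    by (simp add: mult_ac)
  show ?thesis
    unfolding lhs rhs pochhammer_vwp_prefactor_divide[OF n pochhammer_neq_0_mono[OF a_n j]] split reflect
    unfolding B1_def[symmetric] B2_def[symmetric] C1_def[symmetric] C2_def[symmetric]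
    using nonzero[unfolded B1_def[symmetric] B2_def[symmetric] C1_def[symmetric] C2_def[symmetric]]
    by (simp add: field_simps)
qed

lemma chain_last_factor_cons:
  fixes a :: "'a::field_char_0" and b c :: "nat \<Rightarrow> 'a" and m n :: nat
  defines "X1 \<equiv> - a - of_nat n + b (Suc m) + c (Suc (Suc m))"
    and "X2 \<equiv> - a - of_nat n + b (Suc (Suc m)) + c (Suc (Suc m))"
    and "X3 \<equiv> - a - of_nat n + c (Suc m) + c (Suc (Suc m))"
    and "E \<equiv> - 1 - 2 * a - of_nat n + b (Suc m) + b (Suc (Suc m)) + c (Suc m) + c (Suc (Suc m))"
  assumes m: "1 \<le> m" and j: "j \<le> n" and i: "i \<in> chains m (n - j)"
    and X1: "pochhammer X1 n \<noteq> 0" and X2: "pochhammer X2 n \<noteq> 0" and X3: "pochhammer X3 n \<noteq> 0"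
    and E: "pochhammer E n \<noteq> 0"
  shows "chain_last_factor (Suc m) a b c n (chain_cons m j i)
     = pochhammer (- of_nat n) j * pochhammer (c (Suc (Suc m))) j * pochhammer (b (Suc (Suc m))) j
         / (pochhammer X1 j * pochhammer X2 j * pochhammer X3 j)
       * chain_last_factor m (a + 2 * of_nat j) (param_shift b j) (param_shift c j) (n - j) i"
proof -
  define r x y where "r = n - j" and "x = i (m - 1)" and "y = i m"
  have "x \<le> y" "y \<le> r"
    using chains_mono[OF i, of "m - 1" m] i by (simp_all add: x_def y_def r_def chains_def)
  then have jy: "j + y \<le> n" "j + x \<le> n"
    using j r_def by simp_all
  have cons: "chain_cons m j i (Suc m) = j + y" "chain_cons m j i m = j + x"
    using m by (simp_all add: chain_cons_def x_def y_def)
  have shifted: "- (a + 2 * of_nat j) - of_nat r + (b (Suc m) + of_nat j) + (c (Suc (Suc m)) + of_nat j) = X1 + of_nat j"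
    "- (a + 2 * of_nat j) - of_nat r + (b (Suc (Suc m)) + of_nat j) + (c (Suc (Suc m)) + of_nat j) = X2 + of_nat j"
    "- (a + 2 * of_nat j) - of_nat r + (c (Suc m) + of_nat j) + (c (Suc (Suc m)) + of_nat j) = X3 + of_nat j"
    "- 1 - 2 * (a + 2 * of_nat j) - of_nat r + (b (Suc m) + of_nat j) + (b (Suc (Suc m)) + of_nat j)
       + (c (Suc m) + of_nat j) + (c (Suc (Suc m)) + of_nat j) = E + of_nat j"
    "- (a + 2 * of_nat j) - of_nat r + (c (Suc (Suc m)) + of_nat j) = - a - of_nat n + c (Suc (Suc m))"
    using j unfolding X1_def X2_def X3_def E_def r_def by (simp_all add: of_nat_diff algebra_simps)
  have minus_n: "pochhammer (- of_nat n :: 'a) (j + y) = pochhammer (- of_nat n) j * pochhammer (- of_nat r) y"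
    unfolding r_def using j by (rule pochhammer_minus_of_nat_product)
  have nonzero: "pochhammer X j \<noteq> 0" "pochhammer (X + of_nat j) k \<noteq> 0"
    if "pochhammer X n \<noteq> 0" "j + k \<le> n" for X :: 'a and k
    using pochhammer_neq_0_mono[OF that] unfolding pochhammer_product' by auto
  show ?thesis
    unfolding chain_last_factor_def param_shift_def cons Suc_eq_plus1[symmetric] diff_Suc_1
    unfolding X1_def[symmetric] X2_def[symmetric] X3_def[symmetric] E_def[symmetric]
      r_def[symmetric] x_def[symmetric] y_def[symmetric] shifted
    unfolding minus_n
    unfolding pochhammer_product' add_diff_cancel_left
    using nonzero[OF X1 jy(1)] nonzero[OF X2 jy(1)] nonzero[OF X3 jy(1)] nonzero[OF E jy(1)] nonzero[OF E jy(2)]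
    by (simp add: field_simps)
qed

lemma chain_factor_cons_1:
  assumes "i 0 = 0"
  shows "chain_factor a b c (chain_cons m j i) 1
     = pochhammer (1 + a - b 1 - c 1) j * pochhammer (b 2) j * pochhammer (c 2) j
       / (fact j * pochhammer (1 + a - b 1) j * pochhammer (1 + a - c 1) j)"
  using assms by (simp add: chain_factor_def chain_cons_def numeral_2_eq_2)

lemma chain_factor_cons_Suc:
  assumes "1 \<le> k" "k \<le> m"
  shows "chain_factor a b c (chain_cons m j i) (Suc k)
     = chain_factor (a + 2 * of_nat j) (param_shift b j) (param_shift c j) i k
       * (pochhammer (b (Suc (Suc k))) j * pochhammer (c (Suc (Suc k))) j
          / (pochhammer (1 + a - b (Suc k)) j * pochhammer (1 + a - c (Suc k)) j))"
proof -
  have cons: "chain_cons m j i (Suc k) = j + i k" "chain_cons m j i (Suc k - 1) = j + i (k - 1)"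
    using assms by (auto simp: chain_cons_def)
  have shifted: "1 + (a + 2 * of_nat j) - (x + of_nat j) = (1 + a - x) + of_nat j"
    "1 + (a + 2 * of_nat j) - (x + of_nat j) - (y + of_nat j) = 1 + a - x - y" for x y :: 'a
    by simp_all
  show ?thesis
    unfolding chain_factor_def param_shift_def Suc_eq_plus1[symmetric] cons shifted
    by (simp add: pochhammer_product' divide_inverse mult_ac)
qed

lemma prod_chain_factor_cons:
  assumes "1 \<le> m"
  shows "(\<Prod>k=1..m. chain_factor a b c (chain_cons m j i) k)
     = chain_factor a b c (chain_cons m j i) 1
       * (\<Prod>k=1..m-1. chain_factor (a + 2 * of_nat j) (param_shift b j) (param_shift c j) i k)
       * (\<Prod>k=1..m-1. pochhammer (b (k + 2)) j * pochhammer (c (k + 2)) j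
            / (pochhammer (1 + a - b (k + 1)) j * pochhammer (1 + a - c (k + 1)) j))"
proof -
  have "(\<Prod>k=1..m. chain_factor a b c (chain_cons m j i) k)
      = chain_factor a b c (chain_cons m j i) 1 * (\<Prod>k=1..m-1. chain_factor a b c (chain_cons m j i) (Suc k))"
    using assms by (simp add: prod.atLeast_Suc_atMost prod.shift_bounds_cl_Suc_ivl[symmetric])
  also have "(\<Prod>k=1..m-1. chain_factor a b c (chain_cons m j i) (Suc k))
      = (\<Prod>k=1..m-1. chain_factor (a + 2 * of_nat j) (param_shift b j) (param_shift c j) i k
          * (pochhammer (b (k + 2)) j * pochhammer (c (k + 2)) j
             / (pochhammer (1 + a - b (k + 1)) j * pochhammer (1 + a - c (k + 1)) j)))"
    by (intro prod.cong refl, subst chain_factor_cons_Suc) (auto simp: numeral_2_eq_2)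
  finally show ?thesis
    by (simp only: prod.distrib mult.assoc)
qed

lemma chain_summand_cons:
  fixes a :: "'a::field_char_0"
  assumes m: "1 \<le> m" and j: "j \<le> n" and i: "i \<in> chains m (n - j)"
    and adm: "vwp_admissible (Suc m) a b c n"
  shows "a * chain_prefactor (Suc m) a b c n * chain_summand (Suc m) a b c n (chain_cons m j i)
     = vwp_peel_coeff a (b 1) (c 1) n j * wp_ratio_prod (Suc m) a (\<lambda>r. b (Suc r)) (\<lambda>r. c (Suc r)) j
       * ((a + 2 * of_nat j) * (chain_prefactor m (a + 2 * of_nat j) (param_shift b j) (param_shift c j) (n - j)
          * chain_summand m (a + 2 * of_nat j) (param_shift b j) (param_shift c j) (n - j) i))"
proof -
  have b: "pochhammer (1 + a - b (Suc m)) n \<noteq> 0" "pochhammer (1 + a - b (Suc (Suc m))) n \<noteq> 0"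
    and c: "pochhammer (1 + a - c (Suc m)) n \<noteq> 0" "pochhammer (1 + a - c (Suc (Suc m))) n \<noteq> 0"
    and a_n: "pochhammer (1 + a + of_nat n) n \<noteq> 0"
    and X: "pochhammer (- a - of_nat n + b (Suc m) + c (Suc (Suc m))) n \<noteq> 0"
      "pochhammer (- a - of_nat n + b (Suc (Suc m)) + c (Suc (Suc m))) n \<noteq> 0"
      "pochhammer (- a - of_nat n + c (Suc m) + c (Suc (Suc m))) n \<noteq> 0"
      "pochhammer (- 1 - 2 * a - of_nat n + b (Suc m) + b (Suc (Suc m)) + c (Suc m) + c (Suc (Suc m))) n \<noteq> 0"
    using adm m by (auto simp: vwp_admissible_def)
  have i0: "i 0 = 0"
    using i by (simp add: chains_def)
  define a' where "a' = a + 2 * of_nat j"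
  have summand: "chain_summand (Suc m) a b c n (chain_cons m j i)
      = chain_last_factor (Suc m) a b c n (chain_cons m j i) * (\<Prod>k=1..m. chain_factor a b c (chain_cons m j i) k)"
    by (simp add: chain_summand_def)
  show ?thesis
    unfolding summand chain_last_factor_cons[OF m j i X] prod_chain_factor_cons[OF m]
      chain_factor_cons_1[where i = i, OF i0] mult.assoc[of a] chain_prefactor_shift[OF j b(1) b(2) c(1) c(2) a_n]
      wp_ratio_prod_regroup[OF m] vwp_peel_coeff_def
    unfolding chain_summand_def a'_def[symmetric]
    using pochhammer_neq_0_mono[OF X(1) j] pochhammer_neq_0_mono[OF X(2) j] pochhammer_neq_0_mono[OF X(3) j]
    by (simp add: field_simps numeral_2_eq_2)
qed

theorem vwp_sum_eq_chain_sum: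
  fixes a :: "'a::field_char_0"
  assumes "1 \<le> m" and "vwp_admissible m a b c n"
  shows "vwp_sum (Suc m) a b c n
       = a * (chain_prefactor m a b c n * (\<Sum>i\<in>chains m n. chain_summand m a b c n i))"
  using assms
proof (induction m arbitrary: a b c n rule: nat_induct_at_least)
  case base
  then show ?case
    using vwp_sum_2_eq_chain_sum[of a b n c]
    by (simp add: vwp_admissible_def numeral_2_eq_2)
next
  case (Suc m)
  have b1: "pochhammer (1 + a - b 1) n \<noteq> 0" and c1: "pochhammer (1 + a - c 1) n \<noteq> 0"
    and a_n: "pochhammer (1 + a + of_nat n) n \<noteq> 0"
    using Suc.prems by (auto simp: vwp_admissible_def)
  have "vwp_sum (Suc (Suc m)) a b c n
      = (\<Sum>j\<le>n. \<Sum>i\<in>chains m (n - j). a * chain_prefactor (Suc m) a b c n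
           * chain_summand (Suc m) a b c n (chain_cons m j i))"
    unfolding vwp_sum_Suc[where a = a and b = b and c = c and n = n, OF b1 c1 a_n]
  proof (rule sum.cong)
    fix j assume "j \<in> {..n}"
    then have j: "j \<le> n"
      by simp
    note IH = Suc.IH[OF vwp_admissible_shift[OF Suc.prems j]]
    show "vwp_peel_coeff a (b 1) (c 1) n j * wp_ratio_prod (Suc m) a (\<lambda>r. b (Suc r)) (\<lambda>r. c (Suc r)) j
        * vwp_sum (Suc m) (a + 2 * of_nat j) (param_shift b j) (param_shift c j) (n - j)
      = (\<Sum>i\<in>chains m (n - j). a * chain_prefactor (Suc m) a b c n
           * chain_summand (Suc m) a b c n (chain_cons m j i))"
      unfolding IH sum_distrib_left
      by (intro sum.cong refl) (simp add: chain_summand_cons[OF Suc.hyps j _ Suc.prems])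
  qed simp
  then show ?case
    unfolding sum_chains_Suc sum_distrib_left by (simp add: mult.assoc)
qed

lemma hyper_term_vwp:
  fixes a :: complex
  assumes a: "a \<noteq> 0" and half: "pochhammer (a / 2) k \<noteq> 0"
    and b: "\<forall>j\<in>{1..q}. pochhammer (1 + a - b j) k \<noteq> 0" and c: "\<forall>j\<in>{1..q}. pochhammer (1 + a - c j) k \<noteq> 0"
  shows "hyper_term ([a, a / 2 + 1] @ concat (map (\<lambda>j. [b j, c j]) [1..<q+1]) @ [- of_nat n])
      ([a / 2] @ concat (map (\<lambda>j. [1 + a - b j, 1 + a - c j]) [1..<q+1]) @ [1 + a + of_nat n]) 1 k
    = vwp_weight a n k * wp_ratio_prod q a b c k / a"
proof -
  define N D where "N = (\<Prod>j\<in>{1..<q+1}. pochhammer (b j) k * pochhammer (c j) k)"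
    and "D = (\<Prod>j\<in>{1..<q+1}. pochhammer (1 + a - b j) k * pochhammer (1 + a - c j) k)"
  have "D \<noteq> 0"
    using b c by (auto simp: D_def)
  have ratio: "wp_ratio_prod q a b c k = N / D"
    unfolding wp_ratio_prod_eq_prod_atLeastLessThan wp_ratio_def N_def D_def by (simp add: prod_dividef)
  define w where "w = a + 2 * of_nat k"
  have half_Suc: "pochhammer (a / 2 + 1) k = pochhammer (a / 2) k * w / a"
    using pochhammer_half_Suc[of a k] a by (simp add: w_def field_simps)
  have num: "(\<Prod>x\<leftarrow>[a, a / 2 + 1] @ concat (map (\<lambda>j. [b j, c j]) [1..<q+1]) @ [- of_nat n]. pochhammer x k)
      = pochhammer a k * pochhammer (a / 2 + 1) k * N * pochhammer (- of_nat n) k"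
    unfolding map_append prod_list.append N_def prod_list_map_concat_pairs by (simp add: mult_ac)
  have den: "(\<Prod>x\<leftarrow>[a / 2] @ concat (map (\<lambda>j. [1 + a - b j, 1 + a - c j]) [1..<q+1]) @ [1 + a + of_nat n].
        pochhammer x k) = pochhammer (a / 2) k * D * pochhammer (1 + a + of_nat n) k"
    unfolding map_append prod_list.append D_def prod_list_map_concat_pairs by (simp add: mult_ac)
  show ?thesis
    unfolding hyper_term_def num den ratio half_Suc vwp_weight_def w_def[symmetric]
    using a half \<open>D \<noteq> 0\<close> by (simp add: field_simps)
qed

lemma hypergeom_vwp_eq_vwp_sum:
  fixes a :: complex
  assumes a: "a \<noteq> 0" and half: "pochhammer (a / 2) n \<noteq> 0"
    and b: "\<forall>j\<in>{1..q}. pochhammer (1 + a - b j) n \<noteq> 0" and c: "\<forall>j\<in>{1..q}. pochhammer (1 + a - c j) n \<noteq> 0"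
  shows "hypergeom ([a, a / 2 + 1] @ concat (map (\<lambda>j. [b j, c j]) [1..<q+1]) @ [- of_nat n])
      ([a / 2] @ concat (map (\<lambda>j. [1 + a - b j, 1 + a - c j]) [1..<q+1]) @ [1 + a + of_nat n]) 1
    = vwp_sum q a b c n / a"
proof -
  let ?as = "[a, a / 2 + 1] @ concat (map (\<lambda>j. [b j, c j]) [1..<q+1]) @ [- of_nat n]"
  let ?bs = "[a / 2] @ concat (map (\<lambda>j. [1 + a - b j, 1 + a - c j]) [1..<q+1]) @ [1 + a + of_nat n]"
  have "hyper_term ?as ?bs 1 k = 0" if "k \<notin> {..n}" for k
    using that by (simp add: hyper_term_def pochhammer_of_nat_eq_0_lemma)
  then have "hypergeom ?as ?bs 1 = (\<Sum>k\<le>n. hyper_term ?as ?bs 1 k)"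
    unfolding hypergeom_def by (intro suminf_finite) auto
  also have "\<dots> = (\<Sum>k\<le>n. vwp_weight a n k * wp_ratio_prod q a b c k / a)"
  proof (rule sum.cong)
    fix k assume "k \<in> {..n}"
    then have "k \<le> n"
      by simp
    then show "hyper_term ?as ?bs 1 k = vwp_weight a n k * wp_ratio_prod q a b c k / a"
      using b c pochhammer_neq_0_mono[OF half] pochhammer_neq_0_mono[of "1 + a - b _" n k]
        pochhammer_neq_0_mono[of "1 + a - c _" n k]
      by (intro hyper_term_vwp a) auto
  qed simp
  finally show ?thesis
    by (simp add: vwp_sum_def sum_divide_distrib)
qed

theorem mainTheorem7:
  fixes a :: complex and b c :: "nat \<Rightarrow> complex" and m n :: nat
  assumes "m \<ge> 1" and "n \<ge> 1"
    and "pochhammer (a / 2) n \<noteq> 0"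
    and "\<forall>j\<in>{1..m+1}. pochhammer (1 + a - b j) n \<noteq> 0"
    and "\<forall>j\<in>{1..m+1}. pochhammer (1 + a - c j) n \<noteq> 0"
    and "pochhammer (1 + a + of_nat n) n \<noteq> 0"
    and "pochhammer (- a - of_nat n + b m + c (m+1)) n \<noteq> 0"
    and "pochhammer (- a - of_nat n + b (m+1) + c (m+1)) n \<noteq> 0"
    and "pochhammer (- a - of_nat n + c m + c (m+1)) n \<noteq> 0"
    and "pochhammer (- 1 - 2 * a - of_nat n + b m + b (m+1) + c m + c (m+1)) n \<noteq> 0"
  shows "hypergeom
      ([a, a / 2 + 1] @ concat (map (\<lambda>j. [b j, c j]) [1..<m+2]) @ [- of_nat n])
      ([a / 2] @ concat (map (\<lambda>j. [1 + a - b j, 1 + a - c j]) [1..<m+2]) @ [1 + a + of_nat n])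
      1
    = (pochhammer (1 + a) n * pochhammer (1 + a - b m - c (m+1)) n
        * pochhammer (1 + a - b (m+1) - c (m+1)) n * pochhammer (1 + a - c m - c (m+1)) n)
      / (pochhammer (1 + a - b m) n * pochhammer (1 + a - b (m+1)) n
        * pochhammer (1 + a - c m) n * pochhammer (1 + a - c (m+1)) n)
      * (\<Sum>i\<in>chains m n.
          (pochhammer (- of_nat n) (i m) * pochhammer (c (m+1)) (i m))
            / (pochhammer (- a - of_nat n + b m + c (m+1)) (i m)
               * pochhammer (- a - of_nat n + b (m+1) + c (m+1)) (i m))
          * (pochhammer (- 1 - 2 * a - of_nat n + b m + b (m+1) + c m + c (m+1)) (i m)
             * pochhammer (- a - of_nat n + c (m+1)) (i m - i (m-1))
             * pochhammer (b (m+1)) (i (m-1)))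
            / (pochhammer (- a - of_nat n + c m + c (m+1)) (i m)
               * fact (i m - i (m-1))
               * pochhammer (- 1 - 2 * a - of_nat n + b m + b (m+1) + c m + c (m+1)) (i (m-1)))
          * (\<Prod>k=1..m-1.
              (pochhammer (1 + a - b k - c k) (i k - i (k-1))
               * pochhammer (b (k+1)) (i k) * pochhammer (c (k+1)) (i k))
              / (fact (i k - i (k-1)) * pochhammer (1 + a - b k) (i k)
                 * pochhammer (1 + a - c k) (i k))))"
proof -
  have a: "a \<noteq> 0"
    using assms(2,3) by (auto simp: pochhammer_0_left)
  have vwp: "hypergeom
      ([a, a / 2 + 1] @ concat (map (\<lambda>j. [b j, c j]) [1..<m+2]) @ [- of_nat n])
      ([a / 2] @ concat (map (\<lambda>j. [1 + a - b j, 1 + a - c j]) [1..<m+2]) @ [1 + a + of_nat n]) 1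
    = vwp_sum (Suc m) a b c n / a"
    using hypergeom_vwp_eq_vwp_sum[OF a assms(3), of "Suc m" b c] assms(4,5) by simp
  have "vwp_admissible m a b c n"
    using assms(4-10) by (simp add: vwp_admissible_def)
  with assms(1) have "vwp_sum (Suc m) a b c n
      = a * (chain_prefactor m a b c n * (\<Sum>i\<in>chains m n. chain_summand m a b c n i))"
    by (rule vwp_sum_eq_chain_sum)
  with a show ?thesis
    unfolding vwp chain_prefactor_def chain_summand_def chain_last_factor_def chain_factor_def by simp
qed

end
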